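(* Let $A,B\subseteq\mathbb{N}$ with $A\cap B=\emptyset$. Then $$\underline{\underline{d}}(A)+\underline{\underline{d}}(B)\le\underline{\underline{d}}(A\cup B)\le\underline{\underline{d}}(A)+\overline{\overline{d}}(B)\le\overline{\overline{d}}(A\cup B)\le\overline{\overline{d}}(A)+\overline{\overline{d}}(B).$$ If moreover $A\cup B\in\mathcal{D}$, then $d(A\cup B)=\underline{\underline{d}}(A)+\overline{\overline{d}}(B)$. If $A\in\mathcal{D}$ (and $A\cap B=\emptyset$), then $\overline{\overline{d}}(A\cup B)=d(A)+\overline{\overline{d}}(B)$.
   Context: $\mathbb{N}=\{1,2,3,\dots\}$. For $A\subseteq\mathbb{N}$ let $A(n)=|A\cap[1,n]|$. Let $\mathcal{D}$ be the collection of all $A\subseteq\mathbb{N}$ for which the asymptotic density $d(A)=\lim_{n\to\infty}\frac{A(n)}{n}$ exists. Define $\underline{\underline{d}}(A)=\sup\{d(B);\ B\subseteq A,\ B\in\mathcal{D}\}$ and $\overline{\overline{d}}(A)=\inf\{d(C);\ C\supseteq A,\ C\in\mathcal{D}\}$. *)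

theory Defs
  imports "HOL-Analysis.Analysis"
begin

text \<open>Subsets of the positive integers N = {1,2,3,...} are modelled as sets of nat
  contained in {1..}.\<close>

definition counting :: "nat set \<Rightarrow> nat \<Rightarrow> nat" where
  "counting A n = card (A \<inter> {1..n})"

definition has_density :: "nat set \<Rightarrow> real \<Rightarrow> bool" where
  "has_density A a \<longleftrightarrow> ((\<lambda>n. real (counting A n) / real n) \<longlonglongrightarrow> a)"

definition density_sets :: "nat set set" where
  "density_sets = {A. A \<subseteq> {1..} \<and> (\<exists>a. has_density A a)}"

definition density :: "nat set \<Rightarrow> real" where
  "density A = lim (\<lambda>n. real (counting A n) / real n)"

definition lower_ddens :: "nat set \<Rightarrow> real" where
  "lower_ddens A = Sup {density B | B. B \<subseteq> A \<and> B \<in> density_sets}"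

definition upper_ddens :: "nat set \<Rightarrow> real" where
  "upper_ddens A = Inf {density C | C. A \<subseteq> C \<and> C \<in> density_sets}"

end

theory Submission
  imports Defs
begin

text \<open>Every inequality follows from the Sup/Inf definitions by combining witnesses, since
  disjoint unions and differences of sets with density again have a density. The one
  non-trivial ingredient is that for \<open>C\<^sub>1, C\<^sub>2 \<in> \<D>\<close> the union \<open>C\<^sub>1 \<union> C\<^sub>2\<close>, which need not
  have a density, is contained in a set of density at most \<open>d(C\<^sub>1) + d(C\<^sub>2)\<close>: greedily add
  to \<open>C\<^sub>1 \<union> C\<^sub>2\<close> new elements keeping pace with the counting function of \<open>C\<^sub>1 \<inter> C\<^sub>2\<close>. When
  \<open>d(C\<^sub>1) + d(C\<^sub>2) < 1\<close> there is room for this, and the lag behind \<open>C\<^sub>1 \<inter> C\<^sub>2\<close> is \<open>o(n)\<close>.\<close>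

lemma counting_0 [simp]: "counting X 0 = 0"
  unfolding counting_def by simp

lemma counting_Suc: "counting X (Suc n) = counting X n + (if Suc n \<in> X then 1 else 0)"
proof -
  have "X \<inter> {1..Suc n} = (if Suc n \<in> X then insert (Suc n) (X \<inter> {1..n}) else X \<inter> {1..n})"
    using atLeastAtMostSuc_conv[of 1 n] by auto
  then show ?thesis
    unfolding counting_def by (auto simp: card_insert_if)
qed

lemma counting_mono: "X \<subseteq> Y \<Longrightarrow> counting X n \<le> counting Y n"
  unfolding counting_def by (intro card_mono) auto

lemma counting_Un_Int: "counting (X \<union> Y) n + counting (X \<inter> Y) n = counting X n + counting Y n"
proof -
  have "card (X \<inter> {1..n}) + card (Y \<inter> {1..n})
      = card ((X \<inter> {1..n}) \<union> (Y \<inter> {1..n})) + card ((X \<inter> {1..n}) \<inter> (Y \<inter> {1..n}))"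
    by (rule card_Un_Int) auto
  moreover have "(X \<inter> {1..n}) \<union> (Y \<inter> {1..n}) = (X \<union> Y) \<inter> {1..n}"
    and "(X \<inter> {1..n}) \<inter> (Y \<inter> {1..n}) = (X \<inter> Y) \<inter> {1..n}"
    by auto
  ultimately show ?thesis
    unfolding counting_def by simp
qed

lemma counting_Un_disjoint: "X \<inter> Y = {} \<Longrightarrow> counting (X \<union> Y) n = counting X n + counting Y n"
  using counting_Un_Int[of X Y n] by (simp add: counting_def)

lemma counting_positives: "counting {1..} n = n"
  unfolding counting_def by (simp add: Int_absorb1)

lemma density_eqI: "has_density X a \<Longrightarrow> density X = a"
  unfolding has_density_def density_def by (rule limI)

lemma has_density_density: "X \<in> density_sets \<Longrightarrow> has_density X (density X)"
  unfolding density_sets_def using density_eqI by auto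

lemma density_sets_subset: "X \<in> density_sets \<Longrightarrow> X \<subseteq> {1..}"
  unfolding density_sets_def by auto

lemma density_setsI: "X \<subseteq> {1..} \<Longrightarrow> has_density X a \<Longrightarrow> X \<in> density_sets \<and> density X = a"
  unfolding density_sets_def using density_eqI by auto

lemma density_sets_Un:
  assumes "X \<in> density_sets" "Y \<in> density_sets" "X \<inter> Y = {}"
  shows "X \<union> Y \<in> density_sets \<and> density (X \<union> Y) = density X + density Y"
proof (rule density_setsI)
  show "X \<union> Y \<subseteq> {1..}"
    using assms(1,2)[THEN density_sets_subset] by blast
  have "real (counting (X \<union> Y) n) / real n
      = real (counting X n) / real n + real (counting Y n) / real n" for n
    using counting_Un_disjoint[OF assms(3), of n] by (simp add: add_divide_distrib)
  then show "has_density (X \<union> Y) (density X + density Y)"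
    using assms(1,2)[THEN has_density_density] unfolding has_density_def
    by (simp add: tendsto_add)
qed

lemma density_sets_Diff:
  assumes "X \<in> density_sets" "Y \<in> density_sets" "Y \<subseteq> X"
  shows "X - Y \<in> density_sets \<and> density (X - Y) = density X - density Y"
proof (rule density_setsI)
  show "X - Y \<subseteq> {1..}"
    using assms(1)[THEN density_sets_subset] by blast
  have "counting X n = counting Y n + counting (X - Y) n" for n
    using counting_Un_disjoint[of Y "X - Y" n] assms(3) by (simp add: Un_absorb1)
  then have "real (counting (X - Y) n) / real n
      = real (counting X n) / real n - real (counting Y n) / real n" for n
    by (simp add: add_divide_distrib)
  then show "has_density (X - Y) (density X - density Y)"
    using assms(1,2)[THEN has_density_density] unfolding has_density_def
    by (simp add: tendsto_diff)
qed

lemma density_sets_positives: "{1..} \<in> density_sets \<and> density {1..} = 1"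
proof (rule density_setsI)
  have "\<forall>\<^sub>F n in sequentially. 1 = real (counting {1..} n) / real n"
    unfolding counting_positives eventually_sequentially by (auto intro: exI[of _ 1])
  then show "has_density {1..} 1"
    unfolding has_density_def by (rule Lim_transform_eventually[OF tendsto_const])
qed simp

lemma density_sets_empty: "{} \<in> density_sets \<and> density {} = 0"
  by (rule density_setsI) (auto simp: has_density_def counting_def)

lemma density_mono:
  assumes "X \<in> density_sets" "Y \<in> density_sets" "Y \<subseteq> X"
  shows "density Y \<le> density X"
proof (rule LIMSEQ_le)
  show "(\<lambda>n. real (counting Y n) / real n) \<longlonglongrightarrow> density Y"
    and "(\<lambda>n. real (counting X n) / real n) \<longlonglongrightarrow> density X"
    using assms(1,2)[THEN has_density_density] unfolding has_density_def by auto
  show "\<exists>N. \<forall>n\<ge>N. real (counting Y n) / real n \<le> real (counting X n) / real n"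
    using counting_mono[OF assms(3)] by (auto intro!: divide_right_mono)
qed

lemma density_nonneg: "X \<in> density_sets \<Longrightarrow> 0 \<le> density X"
  using density_mono[of X "{}"] density_sets_empty by auto

lemma density_le_1: "X \<in> density_sets \<Longrightarrow> density X \<le> 1"
  using density_mono[of "{1..}" X] density_sets_positives density_sets_subset by auto

lemma lower_ddens_ge_density: "B \<subseteq> X \<Longrightarrow> B \<in> density_sets \<Longrightarrow> density B \<le> lower_ddens X"
  unfolding lower_ddens_def
  by (rule cSup_upper) (auto simp: bdd_above_def intro: density_le_1)

lemma lower_ddens_le:
  "(\<And>B. B \<subseteq> X \<Longrightarrow> B \<in> density_sets \<Longrightarrow> density B \<le> c) \<Longrightarrow> lower_ddens X \<le> c"
  unfolding lower_ddens_def by (rule cSup_least) (use density_sets_empty in auto)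

lemma upper_ddens_le_density: "X \<subseteq> C \<Longrightarrow> C \<in> density_sets \<Longrightarrow> upper_ddens X \<le> density C"
  unfolding upper_ddens_def
  by (rule cInf_lower) (auto simp: bdd_below_def intro: density_nonneg)

lemma upper_ddens_ge:
  "X \<subseteq> {1..} \<Longrightarrow> (\<And>C. X \<subseteq> C \<Longrightarrow> C \<in> density_sets \<Longrightarrow> c \<le> density C) \<Longrightarrow> c \<le> upper_ddens X"
  unfolding upper_ddens_def by (rule cInf_greatest) (use density_sets_positives in auto)

lemma lower_ddens_eq_density: "X \<in> density_sets \<Longrightarrow> lower_ddens X = density X"
  by (meson antisym density_mono lower_ddens_ge_density lower_ddens_le order_refl)

lemma upper_ddens_eq_density: "X \<in> density_sets \<Longrightarrow> upper_ddens X = density X"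
  by (meson antisym density_mono density_sets_subset upper_ddens_le_density upper_ddens_ge order_refl)

lemma sublinear_le_affine:
  fixes f :: "nat \<Rightarrow> real"
  assumes "(\<lambda>n. f n / real n) \<longlonglongrightarrow> 0" and "0 < \<epsilon>"
  obtains K where "\<And>n. f n \<le> \<epsilon> * real n + K"
proof -
  obtain N where "\<forall>n\<ge>N. norm (f n / real n - 0) < \<epsilon>"
    using LIMSEQ_D[OF assms] by blast
  then have N: "\<And>n. n \<ge> N \<Longrightarrow> \<bar>f n / real n\<bar> < \<epsilon>"
    by simp
  have "f n \<le> \<epsilon> * real n + (\<Sum>k\<le>N. \<bar>f k\<bar>)" for n
  proof (cases "n \<le> N")
    case True
    then have "f n \<le> (\<Sum>k\<le>N. \<bar>f k\<bar>)"
      using member_le_sum[of n "{..N}" "\<lambda>k. \<bar>f k\<bar>"] by auto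
    moreover have "0 \<le> \<epsilon> * real n"
      using \<open>0 < \<epsilon>\<close> by simp
    ultimately show ?thesis
      by linarith
  next
    case False
    then have "f n \<le> \<epsilon> * real n"
      using N[of n] by (simp add: abs_less_iff field_simps)
    moreover have "0 \<le> (\<Sum>k\<le>N. \<bar>f k\<bar>)"
      by (simp add: sum_nonneg)
    ultimately show ?thesis
      by linarith
  qed
  then show thesis
    by (rule that)
qed

lemma sublinear_if_le_sublinear:
  fixes f g :: "nat \<Rightarrow> real"
  assumes f: "(\<lambda>n. f n / real n) \<longlonglongrightarrow> 0"
    and g_nonneg: "\<And>n. 0 \<le> g n"
    and g_le: "\<And>n. \<exists>m\<le>n. g n \<le> c + f n + f m"
  shows "(\<lambda>n. g n / real n) \<longlonglongrightarrow> 0"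
proof (rule LIMSEQ_I)
  fix r :: real
  assume "0 < r"
  then have "0 < r / 4"
    by simp
  then obtain K where K: "\<And>n. f n \<le> r / 4 * real n + K"
    using sublinear_le_affine[OF f] by blast
  have g_bound: "g n \<le> (c + 2 * K) + r / 2 * real n" for n
  proof -
    obtain m where "m \<le> n" "g n \<le> c + f n + f m"
      using g_le by blast
    moreover have "r / 4 * real m \<le> r / 4 * real n"
      using \<open>m \<le> n\<close> \<open>0 < r\<close> by (intro mult_left_mono) auto
    ultimately show ?thesis
      using K[of n] K[of m] by linarith
  qed
  have g_div: "g n / real n \<le> (c + 2 * K) / real n + r / 2" if "n > 0" for n
  proof -
    have "g n / real n \<le> ((c + 2 * K) + r / 2 * real n) / real n"
      using g_bound by (rule divide_right_mono) simp
    also have "\<dots> = (c + 2 * K) / real n + r / 2"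
      using that by (simp add: add_divide_distrib)
    finally show ?thesis .
  qed
  obtain N where "\<forall>n\<ge>N. norm ((c + 2 * K) / real n - 0) < r / 2"
    using LIMSEQ_D[OF lim_const_over_n[of "c + 2 * K"], of "r / 2"] \<open>0 < r\<close> by auto
  then have N: "\<And>n. n \<ge> N \<Longrightarrow> \<bar>(c + 2 * K) / real n\<bar> < r / 2"
    by simp
  have "norm (g n / real n - 0) < r" if "n \<ge> max N 1" for n
  proof -
    have "(c + 2 * K) / real n < r / 2"
      using N[of n] that by linarith
    moreover have "0 \<le> g n / real n"
      using g_nonneg[of n] by simp
    ultimately have "g n / real n < r"
      using g_div[of n] that by linarith
    with \<open>0 \<le> g n / real n\<close> show ?thesis
      by simp
  qed
  then show "\<exists>no. \<forall>n\<ge>no. norm (g n / real n - 0) < r"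
    by blast
qed

lemma has_density_error_sublinear:
  assumes "has_density C d"
  shows "(\<lambda>n. \<bar>real (counting C n) - d * real n\<bar> / real n) \<longlonglongrightarrow> 0"
proof -
  have "(\<lambda>n. \<bar>real (counting C n) / real n - d\<bar>) \<longlonglongrightarrow> \<bar>d - d\<bar>"
    using assms unfolding has_density_def by (intro tendsto_intros)
  moreover have "\<bar>real (counting C n) / real n - d\<bar> = \<bar>real (counting C n) - d * real n\<bar> / real n"
    if "n \<ge> 1" for n
  proof -
    have "real (counting C n) / real n - d = (real (counting C n) - d * real n) / real n"
      using that by (simp add: field_simps)
    then show ?thesis
      by simp
  qed
  then have "\<forall>\<^sub>F n in sequentially.
      \<bar>real (counting C n) / real n - d\<bar> = \<bar>real (counting C n) - d * real n\<bar> / real n"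
    unfolding eventually_sequentially by blast
  ultimately show ?thesis
    by (simp add: Lim_transform_eventually)
qed

text \<open>\<open>greedy_fill S I\<close> avoids \<open>S\<close> and takes every available number while it lags behind
  \<open>I\<close>; \<open>greedy_count S I\<close> is its counting function, defined first to make this recursive.\<close>

primrec greedy_count :: "nat set \<Rightarrow> nat set \<Rightarrow> nat \<Rightarrow> nat" where
  "greedy_count S I 0 = 0"
| "greedy_count S I (Suc n) = greedy_count S I n +
     (if Suc n \<notin> S \<and> greedy_count S I n < counting I (Suc n) then 1 else 0)"

definition greedy_fill :: "nat set \<Rightarrow> nat set \<Rightarrow> nat set" where
  "greedy_fill S I = {k. 1 \<le> k \<and> k \<notin> S \<and> greedy_count S I (k - 1) < counting I k}"

lemma counting_greedy_fill: "counting (greedy_fill S I) n = greedy_count S I n"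
  by (induction n) (simp_all add: counting_Suc greedy_fill_def)

lemma greedy_fill_subset: "greedy_fill S I \<subseteq> {1..} - S"
  by (auto simp: greedy_fill_def)

lemma greedy_count_le: "greedy_count S I n \<le> counting I n"
  by (induction n) (auto simp: counting_Suc)

text \<open>Once the lag is positive, every number outside \<open>S\<close> is taken, so the lag then grows
  only with \<open>I\<close> and shrinks with the complement of \<open>S\<close>; \<open>m\<close> is the step right after the
  lag last vanished.\<close>

lemma greedy_count_lag:
  "\<exists>m\<le>n. real (counting I n) - real (greedy_count S I n)
     \<le> (real (counting I n) + real (counting S n) - real n)
       - (real (counting I m) + real (counting S m) - real m) + 1"
proof (induction n)
  case (Suc n)
  show ?case
  proof (cases "greedy_count S I n = counting I n")
    case True
    then have "real (counting I (Suc n)) - real (greedy_count S I (Suc n)) \<le> 1"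
      by (auto simp: counting_Suc)
    then show ?thesis
      by (intro exI[of _ "Suc n"]) auto
  next
    case False
    then have "greedy_count S I n < counting I n"
      using greedy_count_le[of S I n] by simp
    moreover obtain m where "m \<le> n"
      and "real (counting I n) - real (greedy_count S I n)
        \<le> (real (counting I n) + real (counting S n) - real n)
          - (real (counting I m) + real (counting S m) - real m) + 1"
      using Suc.IH by blast
    ultimately have "real (counting I (Suc n)) - real (greedy_count S I (Suc n))
        \<le> (real (counting I (Suc n)) + real (counting S (Suc n)) - real (Suc n))
          - (real (counting I m) + real (counting S m) - real m) + 1"
      by (auto simp: counting_Suc)
    then show ?thesis
      using \<open>m \<le> n\<close> le_SucI by blast
  qed
qed simp

lemma density_sets_Un_cover:
  assumes C1: "C1 \<in> density_sets" and C2: "C2 \<in> density_sets"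
  obtains D where "D \<in> density_sets" "C1 \<union> C2 \<subseteq> D" "density D \<le> density C1 + density C2"
proof (cases "density C1 + density C2 < 1")
  case False
  moreover have "C1 \<union> C2 \<subseteq> {1..}"
    using C1 C2 by (blast dest: density_sets_subset)
  ultimately show ?thesis
    using density_sets_positives by (intro that[of "{1..}"]) auto
next
  case True
  define d1 d2 where "d1 = density C1" and "d2 = density C2"
  define S I where "S = C1 \<union> C2" and "I = C1 \<inter> C2"
  define lag where "lag n = real (counting I n) - real (greedy_count S I n)" for n
  define err where "err n = \<bar>real (counting C1 n) - d1 * real n\<bar> + \<bar>real (counting C2 n) - d2 * real n\<bar>"
    for n
  have counting_S_I:
    "real (counting S k) + real (counting I k) = real (counting C1 k) + real (counting C2 k)" for k
    using counting_Un_Int[of C1 C2 k] unfolding S_def I_def by (metis of_nat_add)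
  have "(\<lambda>n. err n / real n) \<longlonglongrightarrow> 0"
    using tendsto_add_zero[OF C1[THEN has_density_density, THEN has_density_error_sublinear]
        C2[THEN has_density_density, THEN has_density_error_sublinear]]
    unfolding err_def d1_def d2_def by (simp add: add_divide_distrib)
  moreover have "0 \<le> lag n" for n
    using greedy_count_le unfolding lag_def by simp
  moreover have "\<exists>m\<le>n. lag n \<le> 1 + err n + err m" for n
  proof -
    obtain m where "m \<le> n"
      and m: "lag n \<le> (real (counting I n) + real (counting S n) - real n)
          - (real (counting I m) + real (counting S m) - real m) + 1"
      using greedy_count_lag unfolding lag_def by blast
    have "(d1 + d2 - 1) * (real n - real m) \<le> 0"
      using True \<open>m \<le> n\<close> unfolding d1_def d2_def by (intro mult_nonpos_nonneg) auto
    moreover have "(d1 + d2 - 1) * (real n - real m)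
        = d1 * real n + d2 * real n - real n - d1 * real m - d2 * real m + real m"
      by (simp add: algebra_simps)
    ultimately have "lag n \<le> 1 + err n + err m"
      using m counting_S_I[of n] counting_S_I[of m]
        abs_ge_self[of "real (counting C1 n) - d1 * real n"]
        abs_ge_self[of "real (counting C2 n) - d2 * real n"]
        abs_ge_minus_self[of "real (counting C1 m) - d1 * real m"]
        abs_ge_minus_self[of "real (counting C2 m) - d2 * real m"]
      unfolding err_def by linarith
    then show ?thesis
      using \<open>m \<le> n\<close> by blast
  qed
  ultimately have lag: "(\<lambda>n. lag n / real n) \<longlonglongrightarrow> 0"
    by (rule sublinear_if_le_sublinear)
  define D where "D = S \<union> greedy_fill S I"
  have "real (counting D n) / real n
      = real (counting C1 n) / real n + real (counting C2 n) / real n - lag n / real n" for n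
  proof -
    have "S \<inter> greedy_fill S I = {}"
      using greedy_fill_subset by blast
    then have "counting D n = counting S n + greedy_count S I n"
      unfolding D_def by (simp add: counting_Un_disjoint counting_greedy_fill)
    then have "real (counting D n) = real (counting C1 n) + real (counting C2 n) - lag n"
      using counting_S_I[of n] unfolding lag_def by linarith
    then show ?thesis
      by (simp add: add_divide_distrib diff_divide_distrib)
  qed
  moreover have "(\<lambda>n. real (counting C1 n) / real n + real (counting C2 n) / real n - lag n / real n)
      \<longlonglongrightarrow> d1 + d2 - 0"
    using C1[THEN has_density_density] C2[THEN has_density_density] unfolding has_density_def d1_def d2_def
    by (intro tendsto_diff[OF tendsto_add lag])
  ultimately have "has_density D (d1 + d2)"
    unfolding has_density_def by simp
  moreover have "D \<subseteq> {1..}"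
    using C1[THEN density_sets_subset] C2[THEN density_sets_subset] greedy_fill_subset[of S I]
    unfolding D_def S_def by blast
  ultimately have "D \<in> density_sets \<and> density D = d1 + d2"
    by (intro density_setsI)
  moreover have "C1 \<union> C2 \<subseteq> D"
    unfolding D_def S_def by blast
  ultimately show ?thesis
    unfolding d1_def d2_def by (intro that) auto
qed

lemma lower_ddens_Un_ge:
  assumes "A \<inter> B = {}"
  shows "lower_ddens A + lower_ddens B \<le> lower_ddens (A \<union> B)"
proof -
  have bound: "lower_ddens B \<le> lower_ddens (A \<union> B) - density E\<^sub>A"
    if E\<^sub>A: "E\<^sub>A \<subseteq> A" "E\<^sub>A \<in> density_sets" for E\<^sub>A
  proof (rule lower_ddens_le)
    fix E\<^sub>B
    assume "E\<^sub>B \<subseteq> B" "E\<^sub>B \<in> density_sets"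
    then have Un: "E\<^sub>A \<union> E\<^sub>B \<in> density_sets \<and> density (E\<^sub>A \<union> E\<^sub>B) = density E\<^sub>A + density E\<^sub>B"
      using E\<^sub>A assms by (intro density_sets_Un) auto
    have "E\<^sub>A \<union> E\<^sub>B \<subseteq> A \<union> B"
      using E\<^sub>A \<open>E\<^sub>B \<subseteq> B\<close> by blast
    then have "density (E\<^sub>A \<union> E\<^sub>B) \<le> lower_ddens (A \<union> B)"
      using Un by (intro lower_ddens_ge_density) auto
    with Un show "density E\<^sub>B \<le> lower_ddens (A \<union> B) - density E\<^sub>A"
      by simp
  qed
  have "lower_ddens A \<le> lower_ddens (A \<union> B) - lower_ddens B"
  proof (rule lower_ddens_le)
    fix E\<^sub>A
    assume "E\<^sub>A \<subseteq> A" "E\<^sub>A \<in> density_sets"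
    from bound[OF this] show "density E\<^sub>A \<le> lower_ddens (A \<union> B) - lower_ddens B"
      by simp
  qed
  then show ?thesis
    by simp
qed

lemma lower_ddens_Un_le:
  assumes "B \<subseteq> {1..}"
  shows "lower_ddens (A \<union> B) \<le> lower_ddens A + upper_ddens B"
proof -
  have bound: "lower_ddens (A \<union> B) \<le> lower_ddens A + density C"
    if C: "B \<subseteq> C" "C \<in> density_sets" for C
  proof (rule lower_ddens_le)
    fix E
    assume E: "E \<subseteq> A \<union> B" "E \<in> density_sets"
    have co_E: "{1..} - E \<in> density_sets \<and> density ({1..} - E) = 1 - density E"
      using density_sets_Diff[OF _ E(2) density_sets_subset[OF E(2)]] density_sets_positives by simp
    obtain G where G: "G \<in> density_sets" "({1..} - E) \<union> C \<subseteq> G"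
        "density G \<le> density ({1..} - E) + density C"
      using density_sets_Un_cover co_E C(2) by blast
    have co_G: "{1..} - G \<in> density_sets \<and> density ({1..} - G) = 1 - density G"
      using density_sets_Diff[OF _ G(1) density_sets_subset[OF G(1)]] density_sets_positives by simp
    moreover have "{1..} - G \<subseteq> A"
      using G(2) E(1) C(1) by blast
    ultimately have "1 - density G \<le> lower_ddens A"
      using lower_ddens_ge_density[of "{1..} - G" A] by simp
    then show "density E \<le> lower_ddens A + density C"
      using co_E G(3) by simp
  qed
  have "lower_ddens (A \<union> B) - lower_ddens A \<le> upper_ddens B"
  proof (rule upper_ddens_ge[OF assms])
    fix C
    assume "B \<subseteq> C" "C \<in> density_sets"
    from bound[OF this] show "lower_ddens (A \<union> B) - lower_ddens A \<le> density C"
      by simp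
  qed
  then show ?thesis
    by simp
qed

lemma upper_ddens_Un_ge:
  assumes "A \<union> B \<subseteq> {1..}" "A \<inter> B = {}"
  shows "lower_ddens A + upper_ddens B \<le> upper_ddens (A \<union> B)"
proof (rule upper_ddens_ge[OF assms(1)])
  fix F
  assume F: "A \<union> B \<subseteq> F" "F \<in> density_sets"
  have "density E \<le> density F - upper_ddens B" if "E \<subseteq> A" "E \<in> density_sets" for E
  proof -
    have "E \<subseteq> F"
      using that F by blast
    then have diff: "F - E \<in> density_sets \<and> density (F - E) = density F - density E"
      using density_sets_Diff F(2) that(2) by blast
    moreover have "B \<subseteq> F - E"
      using that F assms(2) by blast
    ultimately show ?thesis
      using upper_ddens_le_density[of B "F - E"] by simp
  qed
  then have "lower_ddens A \<le> density F - upper_ddens B"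
    by (rule lower_ddens_le)
  then show "lower_ddens A + upper_ddens B \<le> density F"
    by simp
qed

lemma upper_ddens_Un_le:
  assumes "A \<subseteq> {1..}" "B \<subseteq> {1..}"
  shows "upper_ddens (A \<union> B) \<le> upper_ddens A + upper_ddens B"
proof -
  have bound: "upper_ddens (A \<union> B) - density C\<^sub>B \<le> upper_ddens A"
    if C\<^sub>B: "B \<subseteq> C\<^sub>B" "C\<^sub>B \<in> density_sets" for C\<^sub>B
  proof (rule upper_ddens_ge[OF assms(1)])
    fix C\<^sub>A
    assume "A \<subseteq> C\<^sub>A" "C\<^sub>A \<in> density_sets"
    then obtain D where D: "D \<in> density_sets" "C\<^sub>A \<union> C\<^sub>B \<subseteq> D"
        "density D \<le> density C\<^sub>A + density C\<^sub>B"
      using density_sets_Un_cover C\<^sub>B(2) by blast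
    have "A \<union> B \<subseteq> D"
      using \<open>A \<subseteq> C\<^sub>A\<close> C\<^sub>B(1) D(2) by blast
    then have "upper_ddens (A \<union> B) \<le> density D"
      using D(1) by (rule upper_ddens_le_density)
    with D(3) show "upper_ddens (A \<union> B) - density C\<^sub>B \<le> density C\<^sub>A"
      by simp
  qed
  have "upper_ddens (A \<union> B) - upper_ddens A \<le> upper_ddens B"
  proof (rule upper_ddens_ge[OF assms(2)])
    fix C\<^sub>B
    assume "B \<subseteq> C\<^sub>B" "C\<^sub>B \<in> density_sets"
    from bound[OF this] show "upper_ddens (A \<union> B) - upper_ddens A \<le> density C\<^sub>B"
      by simp
  qed
  then show ?thesis
    by simp
qed

theorem proposition3p11:
  fixes A B :: "nat set"
  assumes "A \<subseteq> {1..}" and "B \<subseteq> {1..}" and "A \<inter> B = {}"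
  shows "lower_ddens A + lower_ddens B \<le> lower_ddens (A \<union> B)
    \<and> lower_ddens (A \<union> B) \<le> lower_ddens A + upper_ddens B
    \<and> lower_ddens A + upper_ddens B \<le> upper_ddens (A \<union> B)
    \<and> upper_ddens (A \<union> B) \<le> upper_ddens A + upper_ddens B
    \<and> (A \<union> B \<in> density_sets \<longrightarrow> density (A \<union> B) = lower_ddens A + upper_ddens B)
    \<and> (A \<in> density_sets \<longrightarrow> upper_ddens (A \<union> B) = density A + upper_ddens B)"
proof -
  have "A \<union> B \<subseteq> {1..}"
    using assms(1,2) by blast
  then have upper_Un_ge: "lower_ddens A + upper_ddens B \<le> upper_ddens (A \<union> B)"
    using assms(3) by (rule upper_ddens_Un_ge)
  have lower_Un_le: "lower_ddens (A \<union> B) \<le> lower_ddens A + upper_ddens B"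
    using assms(2) by (rule lower_ddens_Un_le)
  have upper_Un_le: "upper_ddens (A \<union> B) \<le> upper_ddens A + upper_ddens B"
    using assms(1,2) by (rule upper_ddens_Un_le)
  show ?thesis
    using lower_ddens_Un_ge[OF assms(3)] lower_Un_le upper_Un_ge upper_Un_le
      lower_ddens_eq_density[of "A \<union> B"] upper_ddens_eq_density[of "A \<union> B"]
      lower_ddens_eq_density[of A] upper_ddens_eq_density[of A]
    by auto
qed

end
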